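(* Let $\Pi$ be the elliptic curve $u^2=(2s+1)(9s^2+2s+1)$ and define rational functions on $\Pi$ $$y=\frac12+\frac{45s^6+20s^5+95s^4+92s^3+39s^2-3}{4(5s^2+1)(s+1)^2\,u},\qquad t=\frac12+\frac{s(2s+1)^2(27s^4+28s^3+26s^2+12s+3)}{(s+1)^3u^3}.$$ Then, using $t$ as a local coordinate on $\Pi$ away from its critical points, $y(t)$ is a solution of $\mathrm{P}_{\mathrm{VI}}$ with parameters $(\theta_1,\theta_2,\theta_3,\theta_4)=(1/2,1/2,1/2,2/3)$.
   Context: $\mathrm{P}_{\mathrm{VI}}$ is the equation $$\frac{d^2y}{dt^2}=\frac12\Big(\frac1y+\frac1{y-1}+\frac1{y-t}\Big)\Big(\frac{dy}{dt}\Big)^2-\Big(\frac1t+\frac1{t-1}+\frac1{y-t}\Big)\frac{dy}{dt}+\frac{y(y-1)(y-t)}{t^2(t-1)^2}\Big(\alpha+\beta\frac{t}{y^2}+\gamma\frac{t-1}{(y-1)^2}+\delta\frac{t(t-1)}{(y-t)^2}\Big),$$ with $\alpha=(\theta_4-1)^2/2$, $\beta=-\theta_1^2/2$, $\gamma=\theta_3^2/2$, $\delta=(1-\theta_2^2)/2$. When $y,t$ are given as rational functions of a parameter on a curve, derivatives with respect to $t$ are computed via the chain rule. *)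

theory Defs
  imports "HOL-Analysis.Analysis"
begin

definition PVI_rhs :: "complex \<Rightarrow> complex \<Rightarrow> complex \<Rightarrow> complex \<Rightarrow>
    complex \<Rightarrow> complex \<Rightarrow> complex \<Rightarrow> complex" where
  "PVI_rhs th1 th2 th3 th4 t y y' =
     (let \<alpha> = (th4 - 1)^2 / 2; \<beta> = - (th1^2) / 2; \<gamma> = th3^2 / 2; \<delta> = (1 - th2^2) / 2 in
       (1/2) * (1/y + 1/(y - 1) + 1/(y - t)) * y'^2
       - (1/t + 1/(t - 1) + 1/(y - t)) * y'
       + (y * (y - 1) * (y - t)) / (t^2 * (t - 1)^2)
         * (\<alpha> + \<beta> * t / y^2 + \<gamma> * (t - 1) / (y - 1)^2 + \<delta> * t * (t - 1) / (y - t)^2))"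

definition solves_PVI_on ::
  "complex \<Rightarrow> complex \<Rightarrow> complex \<Rightarrow> complex \<Rightarrow> (complex \<Rightarrow> complex) \<Rightarrow> complex set \<Rightarrow> bool" where
  "solves_PVI_on th1 th2 th3 th4 y A \<longleftrightarrow>
     y holomorphic_on A \<and>
     (\<forall>t\<in>A. deriv (deriv y) t = PVI_rhs th1 th2 th3 th4 t (y t) (deriv y t))"

definition curve_poly :: "complex \<Rightarrow> complex" where
  "curve_poly z = (2*z + 1) * (9*z^2 + 2*z + 1)"

definition Y_curve :: "complex \<Rightarrow> complex \<Rightarrow> complex" where
  "Y_curve z u = 1/2 + (45*z^6 + 20*z^5 + 95*z^4 + 92*z^3 + 39*z^2 - 3)
                    / (4 * (5*z^2 + 1) * (z + 1)^2 * u)"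

definition T_curve :: "complex \<Rightarrow> complex \<Rightarrow> complex" where
  "T_curve z u = 1/2 + z * (2*z + 1)^2 * (27*z^4 + 28*z^3 + 26*z^2 + 12*z + 3)
                    / ((z + 1)^3 * u^3)"

end

(*
  On the curve u^2 = P(s) write t = 1/2 + a(s)/u and y = 1/2 + b(s)/u. Differentiating
  u^2 = P(s) gives d/ds (g(s)/u) = (g' - g P'/(2P))/u, so dt/ds and dy/ds are rational
  functions of s divided by u. Hence dy/dt = k(s) is rational in s, and y'' = k'(s) ds/dt is
  u times a rational function of s. Because theta1 = theta3, Painleve VI is invariant under
  (t, y) -> (1 - t, 1 - y), i.e. under u -> -u, so its right-hand side at (t, y, k(s)) is also
  u times a rational function of s, which involves u only through u^2 = P(s). Comparing the
  two leaves one rational identity in s. All denominators factor into a few explicit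
  irreducible polynomials, and after clearing them a single polynomial identity remains.
*)
theory Submission
  imports Defs
begin

lemma curve_quotient_has_field_derivative:
  fixes S U P g :: "complex \<Rightarrow> complex"
  assumes A: "open A" "t \<in> A" and S: "S holomorphic_on A" and U: "U holomorphic_on A"
    and curve: "\<And>x. x \<in> A \<Longrightarrow> U x ^ 2 = P (S x)" and U_nz: "U t \<noteq> 0"
    and P: "(P has_field_derivative P') (at (S t))"
    and g: "(g has_field_derivative \<sigma> + g (S t) * P' / (2 * P (S t))) (at (S t))"
  shows "((\<lambda>x. g (S x) / U x) has_field_derivative deriv S t * \<sigma> / U t) (at t)"
proof -
  have dS: "(S has_field_derivative deriv S t) (at t)"
    using holomorphic_derivI[OF S A] .
  have dU: "(U has_field_derivative deriv U t) (at t)"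
    using holomorphic_derivI[OF U A] .
  have "((\<lambda>x. U x ^ 2 - P (S x))
      has_field_derivative 2 * U t * deriv U t - P' * deriv S t) (at t)"
    by (auto intro!: derivative_eq_intros dU DERIV_chain2[OF P dS])
  moreover have "((\<lambda>x. U x ^ 2 - P (S x)) has_field_derivative 0) (at t)"
    by (rule has_field_derivative_transform_within_open[of "\<lambda>_. 0" _ _ A]) (use A curve in auto)
  ultimately have U': "2 * U t * deriv U t = P' * deriv S t"
    using DERIV_unique by fastforce
  have "((\<lambda>x. g (S x) / U x) has_field_derivative
      ((\<sigma> + g (S t) * P' / (2 * P (S t))) * deriv S t * U t - g (S t) * deriv U t)
        / (U t * U t)) (at t)"
    by (rule DERIV_divide[OF DERIV_chain2[OF g dS] dU U_nz])
  moreover have "((\<sigma> + g (S t) * P' / (2 * P (S t))) * deriv S t * U t - g (S t) * deriv U t)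
      / (U t * U t) = deriv S t * \<sigma> / U t"
    using U' U_nz unfolding curve[OF A(2), symmetric] by (simp add: field_simps power2_eq_square)
  ultimately show ?thesis by simp
qed

lemma four_square_eq_iff:
  fixes a u :: complex
  assumes "u \<noteq> 0"
  shows "4*a^2 = u^2 \<longleftrightarrow> 1/2 + a/u = 0 \<or> 1/2 + a/u = 1"
proof -
  have "4*a^2 - u^2 = 4 * u^2 * ((1/2 + a/u) * (1/2 + a/u - 1))"
    using assms by (simp add: field_simps power2_eq_square)
  then have "4*a^2 = u^2 \<longleftrightarrow> (1/2 + a/u) * (1/2 + a/u - 1) = 0"
    using assms by (metis eq_iff_diff_eq_0 mult_eq_0_iff power_not_zero zero_neq_numeral)
  then show ?thesis unfolding mult_eq_0_iff right_minus_eq .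
qed

definition PVI_rhs_reduced ::
    "complex \<Rightarrow> complex \<Rightarrow> complex \<Rightarrow> complex \<Rightarrow> complex \<Rightarrow> complex \<Rightarrow> complex \<Rightarrow> complex" where
  "PVI_rhs_reduced th1 th2 th4 a b v k =
     1/2 * (8*b / (4*b^2 - v) + 1 / (b - a)) * k^2 - (8*a / (4*a^2 - v) + 1 / (b - a)) * k
     + 4 * (4*b^2 - v) * (b - a) / (4*a^2 - v)^2
       * ((th4 - 1)^2 / 2 + 2 * th1^2 * v * (8*a*b - 4*b^2 - v) / (4*b^2 - v)^2
          + (1 - th2^2) * (4*a^2 - v) / (8 * (b - a)^2))"

lemma PVI_rhs_centered_eq_reduced:
  fixes a b u k th1 th2 th4 :: complex
  assumes u: "u \<noteq> 0" and a: "4*a^2 \<noteq> u^2" and b: "4*b^2 \<noteq> u^2" and ab: "a \<noteq> b"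
  shows "PVI_rhs th1 th2 th1 th4 (1/2 + a/u) (1/2 + b/u) k
    = u * PVI_rhs_reduced th1 th2 th4 a b (u^2) k"
proof -
  define t where "t = 1/2 + a/u"
  define y where "y = 1/2 + b/u"
  have a_t: "a = u * (t - 1/2)" and b_y: "b = u * (y - 1/2)"
    using u unfolding t_def y_def by (simp_all add: field_simps)
  have tt: "4*a^2 - u^2 = 4 * u^2 * (t * (t - 1))" and yy: "4*b^2 - u^2 = 4 * u^2 * (y * (y - 1))"
    and yt: "b - a = u * (y - t)"
    unfolding a_t b_y by algebra+
  have nz: "t \<noteq> 0" "t \<noteq> 1" "y \<noteq> 0" "y \<noteq> 1" "y \<noteq> t"
    using a b ab tt yy yt u by auto
  have rhs1: "1/y + 1/(y - 1) + 1/(y - t) = u * (8*b / (4*b^2 - u^2) + 1 / (b - a))"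
    unfolding yy yt unfolding b_y using u nz by (simp add: divide_simps) algebra
  have rhs2: "1/t + 1/(t - 1) + 1/(y - t) = u * (8*a / (4*a^2 - u^2) + 1 / (b - a))"
    unfolding tt yt unfolding a_t using u nz by (simp add: divide_simps) algebra
  have rhs3: "y * (y - 1) * (y - t) / (t^2 * (t - 1)^2)
      = u * (4 * (4*b^2 - u^2) * (b - a) / (4*a^2 - u^2)^2)"
    unfolding tt yy yt using u nz by (simp add: divide_simps) algebra
  have rhs4: "- (th1^2) / 2 * t / y^2 + th1^2 / 2 * (t - 1) / (y - 1)^2
      = 2 * th1^2 * u^2 * (8*a*b - 4*b^2 - u^2) / (4*b^2 - u^2)^2"
    unfolding yy unfolding a_t b_y using u nz by (simp add: divide_simps) algebra
  have rhs5: "(1 - th2^2) / 2 * t * (t - 1) / (y - t)^2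
      = (1 - th2^2) * (4*a^2 - u^2) / (8 * (b - a)^2)"
    unfolding tt yt using u nz by (simp add: divide_simps)
  have "PVI_rhs th1 th2 th1 th4 t y k
      = 1/2 * (1/y + 1/(y - 1) + 1/(y - t)) * k^2 - (1/t + 1/(t - 1) + 1/(y - t)) * k
        + y * (y - 1) * (y - t) / (t^2 * (t - 1)^2)
          * ((th4 - 1)^2 / 2 + (- (th1^2) / 2 * t / y^2 + th1^2 / 2 * (t - 1) / (y - 1)^2)
             + (1 - th2^2) / 2 * t * (t - 1) / (y - t)^2)"
    unfolding PVI_rhs_def Let_def by (simp add: add.assoc)
  also have "\<dots> = u * PVI_rhs_reduced th1 th2 th4 a b (u^2) k"
    unfolding rhs1 rhs2 rhs3 rhs4 rhs5 PVI_rhs_reduced_def by (simp only: ring_distribs ac_simps)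
  finally show ?thesis unfolding t_def y_def .
qed

(* They are kept as
   separate constants so that field_simps treats them as atoms; only the final identities are
   expanded. The critical points of t are the zeros of zm1, z3p1 and p3; sextic_y01 and
   cubic_yt are the remaining factors of y (y - 1) and of y - t. *)
definition zp1 :: "complex \<Rightarrow> complex" where "zp1 z = z + 1"
definition zm1 :: "complex \<Rightarrow> complex" where "zm1 z = z - 1"
definition z2p1 :: "complex \<Rightarrow> complex" where "z2p1 z = 2*z + 1"
definition z3p1 :: "complex \<Rightarrow> complex" where "z3p1 z = 3*z + 1"
definition p3 :: "complex \<Rightarrow> complex" where "p3 z = 3*z^2 + 2*z + 1"
definition p5 :: "complex \<Rightarrow> complex" where "p5 z = 5*z^2 + 1"
definition p9 :: "complex \<Rightarrow> complex" where "p9 z = 9*z^2 + 2*z + 1"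
definition T_quartic :: "complex \<Rightarrow> complex" where
  "T_quartic z = 27*z^4 + 28*z^3 + 26*z^2 + 12*z + 3"
definition Y_sextic :: "complex \<Rightarrow> complex" where
  "Y_sextic z = 45*z^6 + 20*z^5 + 95*z^4 + 92*z^3 + 39*z^2 - 3"
definition sextic_y01 :: "complex \<Rightarrow> complex" where
  "sextic_y01 z = 225*z^6 + 450*z^5 + 825*z^4 + 740*z^3 + 315*z^2 + 42*z - 5"
definition cubic_yt :: "complex \<Rightarrow> complex" where
  "cubic_yt z = 15*z^3 + 15*z^2 + 5*z + 1"
definition dY_dT_num :: "complex \<Rightarrow> complex" where
  "dY_dT_num z = 675*z^9 + 5400*z^8 + 10800*z^7 + 12780*z^6 + 9770*z^5 + 4964*z^4 + 1760*z^3
     + 436*z^2 + 67*z + 4"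
definition dY_dT'_num :: "complex \<Rightarrow> complex" where
  "dY_dT'_num z = - 546750*z^18 - 911250*z^17 + 8515125*z^16 + 36734850*z^15 + 74329650*z^14
     + 96943590*z^13 + 92843490*z^12 + 71592330*z^11 + 47777726*z^10 + 28826282*z^9
     + 15746940*z^8 + 7536678*z^7 + 3033126*z^6 + 992898*z^5 + 256590*z^4 + 50382*z^3
     + 7080*z^2 + 640*z + 31"

lemmas factor_defs = zp1_def zm1_def z2p1_def z3p1_def p3_def p5_def p9_def T_quartic_def
  Y_sextic_def sextic_y01_def cubic_yt_def dY_dT_num_def dY_dT'_num_def

definition curve_poly' :: "complex \<Rightarrow> complex" where "curve_poly' z = 54*z^2 + 26*z + 4"

(* At the point (z, u) of the curve, t = 1/2 + T_reduced z / u, y = 1/2 + Y_reduced z / u,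
   dt/dz = T_slope z / u and dy/dt = dY_dT z; dY_dT' is the derivative of dY_dT. *)
definition T_reduced :: "complex \<Rightarrow> complex" where
  "T_reduced z = z * z2p1 z * T_quartic z / (zp1 z ^ 3 * p9 z)"
definition Y_reduced :: "complex \<Rightarrow> complex" where
  "Y_reduced z = Y_sextic z / (4 * p5 z * zp1 z ^ 2)"
definition T_slope :: "complex \<Rightarrow> complex" where
  "T_slope z = - 3 * zm1 z ^ 3 * z3p1 z ^ 3 * p3 z / (zp1 z ^ 4 * p9 z ^ 2)"
definition dY_dT :: "complex \<Rightarrow> complex" where
  "dY_dT z = - zp1 z * p9 z * dY_dT_num z / (4 * z2p1 z * zm1 z * p5 z ^ 2 * z3p1 z ^ 3 * p3 z)"
definition dY_dT' :: "complex \<Rightarrow> complex" where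
  "dY_dT' z = dY_dT'_num z / (4 * z2p1 z ^ 2 * zm1 z ^ 2 * p5 z ^ 3 * z3p1 z ^ 4 * p3 z ^ 2)"

lemma curve_poly_factors: "curve_poly z = z2p1 z * p9 z"
  unfolding curve_poly_def z2p1_def p9_def ..

lemma T_curve_reduced:
  assumes "u ^ 2 = curve_poly z" "u \<noteq> 0" "zp1 z \<noteq> 0"
  shows "T_curve z u = 1/2 + T_reduced z / u"
proof -
  have nz: "z2p1 z \<noteq> 0" "p9 z \<noteq> 0" and u3: "u ^ 3 = u * (z2p1 z * p9 z)"
    using assms(1,2) unfolding curve_poly_factors by (auto simp: power2_eq_square power3_eq_cube)
  have "T_curve z u = 1/2 + z * z2p1 z ^ 2 * T_quartic z / (zp1 z ^ 3 * u ^ 3)"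
    unfolding T_curve_def factor_defs ..
  also have "\<dots> = 1/2 + T_reduced z / u"
    unfolding u3 T_reduced_def using nz assms(2,3) by (simp add: field_simps power2_eq_square)
  finally show ?thesis .
qed

lemma Y_curve_reduced: "Y_curve z u = 1/2 + Y_reduced z / u"
  unfolding Y_curve_def Y_reduced_def Y_sextic_def p5_def zp1_def by (simp add: ac_simps)

lemma Y_reduced_square_minus_curve:
  assumes "zp1 z \<noteq> 0" "p5 z \<noteq> 0"
  shows "4 * Y_reduced z ^ 2 - curve_poly z
    = zm1 z ^ 3 * z3p1 z * p3 z * sextic_y01 z / (4 * zp1 z ^ 4 * p5 z ^ 2)"
  unfolding Y_reduced_def curve_poly_factors
  by (simp add: field_simps assms) (unfold factor_defs, algebra)

lemma T_reduced_square_minus_curve: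
  assumes "zp1 z \<noteq> 0" "p9 z \<noteq> 0"
  shows "4 * T_reduced z ^ 2 - curve_poly z
    = - (z2p1 z * zm1 z ^ 4 * z3p1 z ^ 4 * p3 z ^ 2) / (zp1 z ^ 6 * p9 z ^ 2)"
  unfolding T_reduced_def curve_poly_factors
  by (simp add: field_simps assms) (unfold factor_defs, algebra)

lemma Y_reduced_minus_T_reduced:
  assumes "zp1 z \<noteq> 0" "p9 z \<noteq> 0" "p5 z \<noteq> 0"
  shows "Y_reduced z - T_reduced z
    = 3 * zm1 z ^ 3 * z3p1 z * p3 z * cubic_yt z / (4 * zp1 z ^ 3 * p9 z * p5 z)"
  unfolding T_reduced_def Y_reduced_def
  by (simp add: field_simps assms) (unfold factor_defs, algebra)

lemma factors_has_field_derivative: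
  "(zp1 has_field_derivative 1) (at z within A)"
  "(zm1 has_field_derivative 1) (at z within A)"
  "(z2p1 has_field_derivative 2) (at z within A)"
  "(z3p1 has_field_derivative 3) (at z within A)"
  "(p3 has_field_derivative 6*z + 2) (at z within A)"
  "(p5 has_field_derivative 10*z) (at z within A)"
  "(p9 has_field_derivative 18*z + 2) (at z within A)"
  "(T_quartic has_field_derivative 108*z^3 + 84*z^2 + 52*z + 12) (at z within A)"
  "(Y_sextic has_field_derivative 270*z^5 + 100*z^4 + 380*z^3 + 276*z^2 + 78*z) (at z within A)"
  "(dY_dT_num has_field_derivative 6075*z^8 + 43200*z^7 + 75600*z^6 + 76680*z^5 + 48850*z^4
     + 19856*z^3 + 5280*z^2 + 872*z + 67) (at z within A)"
  unfolding factor_defs[abs_def] by (auto intro!: derivative_eq_intros simp: algebra_simps)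

lemma curve_poly_has_field_derivative: "(curve_poly has_field_derivative curve_poly' z) (at z)"
  unfolding curve_poly_factors[abs_def] curve_poly'_def
  by (auto intro!: derivative_eq_intros factors_has_field_derivative
      simp: factor_defs algebra_simps power2_eq_square)

lemma T_reduced_has_field_derivative:
  assumes "zp1 z \<noteq> 0" "z2p1 z \<noteq> 0" "p9 z \<noteq> 0"
  shows "(T_reduced has_field_derivative
    T_slope z + T_reduced z * curve_poly' z / (2 * curve_poly z)) (at z)"
  unfolding T_reduced_def[abs_def]
  apply (rule derivative_eq_intros factors_has_field_derivative refl)+
   apply (use assms in simp)
  unfolding T_slope_def curve_poly_factors curve_poly'_def
  by (simp add: field_simps assms) (unfold factor_defs, algebra)

lemma Y_reduced_has_field_derivative:
  assumes "zp1 z \<noteq> 0" "zm1 z \<noteq> 0" "z2p1 z \<noteq> 0" "z3p1 z \<noteq> 0" "p3 z \<noteq> 0" "p5 z \<noteq> 0" "p9 z \<noteq> 0"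
  shows "(Y_reduced has_field_derivative
    dY_dT z * T_slope z + Y_reduced z * curve_poly' z / (2 * curve_poly z)) (at z)"
  unfolding Y_reduced_def[abs_def]
  apply (rule derivative_eq_intros factors_has_field_derivative refl)+
   apply (use assms in simp)
  unfolding dY_dT_def T_slope_def curve_poly_factors curve_poly'_def
  by (simp add: field_simps assms) (unfold factor_defs, algebra)

lemma dY_dT_has_field_derivative:
  assumes "z2p1 z \<noteq> 0" "zm1 z \<noteq> 0" "z3p1 z \<noteq> 0" "p3 z \<noteq> 0" "p5 z \<noteq> 0"
  shows "(dY_dT has_field_derivative dY_dT' z) (at z)"
  unfolding dY_dT_def[abs_def]
  apply (rule derivative_eq_intros factors_has_field_derivative refl)+
   apply (use assms in simp)
  unfolding dY_dT'_def
  by (simp add: field_simps assms) (unfold factor_defs, algebra)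

lemma PVI_coefficients_on_curve:
  assumes nz: "zp1 z \<noteq> 0" "zm1 z \<noteq> 0" "z2p1 z \<noteq> 0" "z3p1 z \<noteq> 0" "p3 z \<noteq> 0" "p5 z \<noteq> 0"
    "p9 z \<noteq> 0" "sextic_y01 z \<noteq> 0" "cubic_yt z \<noteq> 0"
  shows "8 * Y_reduced z / (4 * Y_reduced z ^ 2 - curve_poly z) + 1 / (Y_reduced z - T_reduced z)
      = 4 * zp1 z ^ 2 * p5 z * (6 * Y_sextic z * cubic_yt z + zp1 z * p9 z * sextic_y01 z)
        / (3 * zm1 z ^ 3 * z3p1 z * p3 z * sextic_y01 z * cubic_yt z)"
    and "8 * T_reduced z / (4 * T_reduced z ^ 2 - curve_poly z) + 1 / (Y_reduced z - T_reduced z)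
      = 4 * zp1 z ^ 3 * p9 z * (p5 z * zm1 z * z3p1 z ^ 3 * p3 z - 6 * z * T_quartic z * cubic_yt z)
        / (3 * zm1 z ^ 4 * z3p1 z ^ 4 * p3 z ^ 2 * cubic_yt z)"
  unfolding Y_reduced_square_minus_curve[OF nz(1,6)] T_reduced_square_minus_curve[OF nz(1,7)]
    Y_reduced_minus_T_reduced[OF nz(1,7,6)]
  unfolding Y_reduced_def T_reduced_def using nz by (simp_all add: field_simps) algebra+

lemma PVI_rhs_reduced_on_curve:
  assumes nz: "zp1 z \<noteq> 0" "zm1 z \<noteq> 0" "z2p1 z \<noteq> 0" "z3p1 z \<noteq> 0" "p3 z \<noteq> 0" "p5 z \<noteq> 0"
    "p9 z \<noteq> 0"
    and y01: "4 * Y_reduced z ^ 2 \<noteq> curve_poly z" and yt: "Y_reduced z \<noteq> T_reduced z"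
  shows "PVI_rhs_reduced (1/2) (1/2) (2/3) (T_reduced z) (Y_reduced z) (curve_poly z) (dY_dT z)
    = dY_dT' z / T_slope z"
proof -
  note YY = Y_reduced_square_minus_curve[OF nz(1,6)]
  note TT = T_reduced_square_minus_curve[OF nz(1,7)]
  note YT = Y_reduced_minus_T_reduced[OF nz(1,7,6)]
  have sextic: "sextic_y01 z \<noteq> 0" using y01 YY by auto
  have cubic: "cubic_yt z \<noteq> 0" using yt YT by auto
  define cross_num where "cross_num = 8 * z * z2p1 z * T_quartic z * Y_sextic z * p5 z
    - zp1 z * p9 z * Y_sextic z ^ 2 - 4 * zp1 z ^ 5 * z2p1 z * p9 z ^ 2 * p5 z ^ 2"
  define bracket_num where "bracket_num
    = zm1 z ^ 6 * z3p1 z ^ 2 * p3 z ^ 2 * sextic_y01 z ^ 2 * cubic_yt z ^ 2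
    + 36 * z2p1 z * zp1 z ^ 3 * p5 z ^ 2 * cross_num * cubic_yt z ^ 2
    - 3 * z2p1 z * z3p1 z ^ 4 * p5 z ^ 2 * zm1 z ^ 4 * p3 z ^ 2 * sextic_y01 z ^ 2"
  have bracket: "(2/3 - 1)^2 / 2 + 2 * (1/2)^2 * curve_poly z
        * (8 * T_reduced z * Y_reduced z - 4 * Y_reduced z ^ 2 - curve_poly z)
        / (4 * Y_reduced z ^ 2 - curve_poly z)^2
      + (1 - (1/2)^2) * (4 * T_reduced z ^ 2 - curve_poly z) / (8 * (Y_reduced z - T_reduced z)^2)
      = bracket_num / (18 * zm1 z ^ 6 * z3p1 z ^ 2 * p3 z ^ 2 * sextic_y01 z ^ 2 * cubic_yt z ^ 2)"
    unfolding YY TT YT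
    unfolding bracket_num_def cross_num_def T_reduced_def Y_reduced_def curve_poly_factors
    using nz sextic cubic by (simp add: field_simps) algebra
  define rhs_num where "rhs_num
    = dY_dT_num z ^ 2 * (6 * Y_sextic z * cubic_yt z + zp1 z * p9 z * sextic_y01 z)
    + 8 * z2p1 z * p5 z * sextic_y01 z * dY_dT_num z
      * (p5 z * zm1 z * z3p1 z ^ 3 * p3 z - 6 * z * T_quartic z * cubic_yt z)
    + 2 * dY_dT'_num z * sextic_y01 z * cubic_yt z"
  (* The one identity that depends on the actual polynomials (of degree 33); all other steps
     hold with the factors read as independent variables. *)
  have "zp1 z * p9 z * bracket_num = - (zm1 z ^ 3 * z3p1 z * p3 z * rhs_num)"
    unfolding bracket_num_def cross_num_def rhs_num_def factor_defs by algebra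
  then have bracket_num: "bracket_num = - (zm1 z ^ 3 * z3p1 z * p3 z * rhs_num) / (zp1 z * p9 z)"
    using nz by (simp add: field_simps)
  show ?thesis
    unfolding PVI_rhs_reduced_def PVI_coefficients_on_curve[OF nz sextic cubic] bracket bracket_num
    unfolding YY TT YT unfolding dY_dT_def dY_dT'_def T_slope_def rhs_num_def
    using nz sextic cubic by (simp add: field_simps) algebra
qed

locale t_chart =
  fixes A :: "complex set" and S U :: "complex \<Rightarrow> complex"
  assumes open_A: "open A"
    and holomorphic_S: "S holomorphic_on A" and holomorphic_U: "U holomorphic_on A"
    and on_curve: "\<And>t. t \<in> A \<Longrightarrow> (U t)^2 = curve_poly (S t)"
    and T_chart: "\<And>t. t \<in> A \<Longrightarrow> T_curve (S t) (U t) = t"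
    and regular: "\<And>t. t \<in> A \<Longrightarrow> U t \<noteq> 0 \<and> S t + 1 \<noteq> 0 \<and> 5 * (S t)^2 + 1 \<noteq> 0"
begin

lemma factors_nonzero:
  assumes "t \<in> A"
  shows "U t \<noteq> 0" "zp1 (S t) \<noteq> 0" "p5 (S t) \<noteq> 0" "z2p1 (S t) \<noteq> 0" "p9 (S t) \<noteq> 0"
proof -
  show "U t \<noteq> 0" "zp1 (S t) \<noteq> 0" "p5 (S t) \<noteq> 0"
    using regular[OF assms] unfolding zp1_def p5_def by auto
  then have "z2p1 (S t) * p9 (S t) \<noteq> 0"
    using on_curve[OF assms] unfolding curve_poly_factors by auto
  then show "z2p1 (S t) \<noteq> 0" "p9 (S t) \<noteq> 0" by auto
qed

lemma T_reduced_chart: "t \<in> A \<Longrightarrow> t = 1/2 + T_reduced (S t) / U t"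
  using T_chart T_curve_reduced on_curve factors_nonzero by metis

lemma reduced_has_field_derivative:
  assumes "t \<in> A"
    and "(g has_field_derivative \<sigma> + g (S t) * curve_poly' (S t) / (2 * curve_poly (S t)))
      (at (S t))"
  shows "((\<lambda>x. g (S x) / U x) has_field_derivative deriv S t * \<sigma> / U t) (at t)"
  using curve_quotient_has_field_derivative[OF open_A assms(1) holomorphic_S holomorphic_U on_curve
      factors_nonzero(1)[OF assms(1)] curve_poly_has_field_derivative assms(2)] .

lemma deriv_S_T_slope:
  assumes "t \<in> A"
  shows "deriv S t * T_slope (S t) = U t"
proof -
  note nz = factors_nonzero[OF assms]
  have "((\<lambda>x. T_reduced (S x) / U x) has_field_derivative deriv S t * T_slope (S t) / U t) (at t)"
    using reduced_has_field_derivative[OF assms T_reduced_has_field_derivative] nz by blast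
  moreover have "((\<lambda>x. T_reduced (S x) / U x) has_field_derivative 1) (at t)"
  proof (rule has_field_derivative_transform_within_open[OF _ open_A assms])
    show "((\<lambda>x. x - 1/2) has_field_derivative 1) (at t)"
      by (auto intro!: derivative_eq_intros)
    show "x - 1/2 = T_reduced (S x) / U x" if "x \<in> A" for x
      using T_reduced_chart[OF that] by (metis add_diff_cancel_left')
  qed
  ultimately have "deriv S t * T_slope (S t) / U t = 1"
    using DERIV_unique by blast
  with nz(1) show ?thesis by (simp add: field_simps)
qed

lemma T_slope_nonzero: "t \<in> A \<Longrightarrow> T_slope (S t) \<noteq> 0"
  using deriv_S_T_slope factors_nonzero(1) by fastforce

lemma critical_factors_nonzero:
  assumes "t \<in> A"
  shows "zm1 (S t) \<noteq> 0" "z3p1 (S t) \<noteq> 0" "p3 (S t) \<noteq> 0"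
  using T_slope_nonzero[OF assms] unfolding T_slope_def by auto

lemma Y_has_field_derivative:
  assumes "t \<in> A"
  shows "((\<lambda>x. Y_curve (S x) (U x)) has_field_derivative dY_dT (S t)) (at t)"
proof -
  note nz = factors_nonzero[OF assms] critical_factors_nonzero[OF assms]
  have "((\<lambda>x. Y_reduced (S x) / U x)
      has_field_derivative deriv S t * (dY_dT (S t) * T_slope (S t)) / U t) (at t)"
    using reduced_has_field_derivative[OF assms Y_reduced_has_field_derivative] nz by blast
  moreover have "deriv S t * (dY_dT (S t) * T_slope (S t)) / U t = dY_dT (S t)"
    using deriv_S_T_slope[OF assms] nz(1) by (simp add: field_simps)
  ultimately show ?thesis
    unfolding Y_curve_reduced using DERIV_add[OF DERIV_const[where k="1/2"]] by fastforce
qed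

lemma deriv_deriv_Y:
  assumes "t \<in> A"
  shows "deriv (deriv (\<lambda>x. Y_curve (S x) (U x))) t = dY_dT' (S t) * U t / T_slope (S t)"
proof -
  note nz = factors_nonzero[OF assms] critical_factors_nonzero[OF assms]
  have "eventually (\<lambda>x. deriv (\<lambda>x. Y_curve (S x) (U x)) x = dY_dT (S x)) (nhds t)"
    using eventually_nhds_in_open[OF open_A assms]
    by (rule eventually_mono) (use Y_has_field_derivative DERIV_imp_deriv in blast)
  then have "deriv (deriv (\<lambda>x. Y_curve (S x) (U x))) t = deriv (\<lambda>x. dY_dT (S x)) t"
    by (rule deriv_cong_ev) simp
  also have "\<dots> = dY_dT' (S t) * deriv S t"
    using nz by (intro DERIV_imp_deriv DERIV_chain2[OF dY_dT_has_field_derivative]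
        holomorphic_derivI[OF holomorphic_S open_A assms])
  also have "\<dots> = dY_dT' (S t) * U t / T_slope (S t)"
    unfolding deriv_S_T_slope[OF assms, symmetric] using T_slope_nonzero[OF assms] by simp
  finally show ?thesis .
qed

lemma Y_holomorphic: "(\<lambda>t. Y_curve (S t) (U t)) holomorphic_on A"
  using Y_has_field_derivative holomorphic_on_open[OF open_A] by blast

lemma Y_solves_PVI_at:
  assumes t: "t \<in> A" and "t \<noteq> 0" "t \<noteq> 1"
    and "Y_curve (S t) (U t) \<noteq> 0" "Y_curve (S t) (U t) \<noteq> 1" "Y_curve (S t) (U t) \<noteq> t"
  shows "deriv (deriv (\<lambda>t. Y_curve (S t) (U t))) t
    = PVI_rhs (1/2) (1/2) (1/2) (2/3) t (Y_curve (S t) (U t)) (deriv (\<lambda>t. Y_curve (S t) (U t)) t)"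
proof -
  define z u where "z = S t" and "u = U t"
  note zu = z_def[symmetric] u_def[symmetric]
  have nz: "u \<noteq> 0" "zp1 z \<noteq> 0" "zm1 z \<noteq> 0" "z2p1 z \<noteq> 0" "z3p1 z \<noteq> 0" "p3 z \<noteq> 0" "p5 z \<noteq> 0"
    "p9 z \<noteq> 0"
    using factors_nonzero[OF t, unfolded zu] critical_factors_nonzero[OF t, unfolded zu] by simp_all
  have T: "t = 1/2 + T_reduced z / u" and P: "u^2 = curve_poly z"
    using T_reduced_chart[OF t, unfolded zu] on_curve[OF t, unfolded zu] .
  have nondeg: "4 * T_reduced z ^ 2 \<noteq> u^2" "4 * Y_reduced z ^ 2 \<noteq> u^2" "T_reduced z \<noteq> Y_reduced z"
    using assms(2-)[unfolded zu Y_curve_reduced] nz(1) by (auto simp: T four_square_eq_iff)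
  have "PVI_rhs (1/2) (1/2) (1/2) (2/3) t (Y_curve z u) (dY_dT z)
      = u * PVI_rhs_reduced (1/2) (1/2) (2/3) (T_reduced z) (Y_reduced z) (u^2) (dY_dT z)"
    unfolding T Y_curve_reduced by (rule PVI_rhs_centered_eq_reduced[OF nz(1) nondeg])
  also have "\<dots> = u * (dY_dT' z / T_slope z)"
    using PVI_rhs_reduced_on_curve[OF nz(2-8)] nondeg unfolding P by simp
  finally show ?thesis
    using deriv_deriv_Y[OF t] DERIV_imp_deriv[OF Y_has_field_derivative[OF t]] unfolding zu by simp
qed

end

theorem mainTheorem11:
  fixes A :: "complex set" and S U :: "complex \<Rightarrow> complex"
  assumes "open A"
    and "S holomorphic_on A" and "U holomorphic_on A"
    and "\<And>t. t \<in> A \<Longrightarrow> (U t)^2 = curve_poly (S t)"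
    and "\<And>t. t \<in> A \<Longrightarrow> T_curve (S t) (U t) = t"
    and "\<And>t. t \<in> A \<Longrightarrow> U t \<noteq> 0 \<and> S t + 1 \<noteq> 0 \<and> 5 * (S t)^2 + 1 \<noteq> 0"
    and "\<And>t. t \<in> A \<Longrightarrow> t \<noteq> 0 \<and> t \<noteq> 1"
    and "\<And>t. t \<in> A \<Longrightarrow> Y_curve (S t) (U t) \<noteq> 0 \<and> Y_curve (S t) (U t) \<noteq> 1
                              \<and> Y_curve (S t) (U t) \<noteq> t"
  shows "solves_PVI_on (1/2) (1/2) (1/2) (2/3) (\<lambda>t. Y_curve (S t) (U t)) A"
proof -
  interpret t_chart A S U
    using assms(1-6) by unfold_locales
  show ?thesis
    unfolding solves_PVI_on_def using Y_holomorphic Y_solves_PVI_at assms(7,8) by blast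
qed

end
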